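(* Let $A$ be an operator algebra which has a right contractive approximate identity $\{e_\alpha\}$ and also has a right identity. Then $A$ has a right identity of norm $1$, and it is the norm limit of $\{e_\alpha\}$.
   Context: An operator algebra is a (complete) algebra with matrix norms completely isometrically isomorphic, via a homomorphism, to a closed subalgebra of some $B(H)$. A right contractive approximate identity is a net $\{e_\alpha\}$ in the unit ball with $ae_\alpha\to a$ for all $a\in A$; a right identity is an element $e$ with $ae=a$ for all $a\in A$. *)

theory Defs
  imports "HOL-Analysis.Analysis"
begin

text \<open>A complex Hilbert space is modelled as a real Hilbert space 'h together with
 an orthogonal complex structure J (multiplication by i): J o J = -1 and J preserves
 the real inner product.  Bounded complex-linear operators are exactly the bounded
 real-linear operators commuting with J; the operator norm is the same.\<close>

definition complex_structure :: "('h::{real_inner,complete_space} \<Rightarrow>\<^sub>L 'h) \<Rightarrow> bool" where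
  "complex_structure J \<longleftrightarrow> (\<forall>x. J (J x) = - x) \<and> (\<forall>x y. inner (J x) (J y) = inner x y)"

definition complex_linear_op :: "('h::{real_inner,complete_space} \<Rightarrow>\<^sub>L 'h) \<Rightarrow> ('h \<Rightarrow>\<^sub>L 'h) \<Rightarrow> bool" where
  "complex_linear_op J T \<longleftrightarrow> T o\<^sub>L J = J o\<^sub>L T"

definition operator_algebra :: "('h::{real_inner,complete_space} \<Rightarrow>\<^sub>L 'h) \<Rightarrow> ('h \<Rightarrow>\<^sub>L 'h) set \<Rightarrow> bool" where
  "operator_algebra J A \<longleftrightarrow>
     complex_structure J \<and>
     (\<forall>T\<in>A. complex_linear_op J T) \<and>
     0 \<in> A \<and>
     (\<forall>S\<in>A. \<forall>T\<in>A. S + T \<in> A) \<and>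
     (\<forall>r::real. \<forall>T\<in>A. r *\<^sub>R T \<in> A) \<and>
     (\<forall>T\<in>A. J o\<^sub>L T \<in> A) \<and>
     (\<forall>S\<in>A. \<forall>T\<in>A. S o\<^sub>L T \<in> A) \<and>
     closed A"

definition directed_set :: "'i set \<Rightarrow> ('i \<Rightarrow> 'i \<Rightarrow> bool) \<Rightarrow> bool" where
  "directed_set I le \<longleftrightarrow> I \<noteq> {} \<and> (\<forall>a\<in>I. le a a) \<and>
     (\<forall>a\<in>I. \<forall>b\<in>I. \<forall>c\<in>I. le a b \<longrightarrow> le b c \<longrightarrow> le a c) \<and>
     (\<forall>a\<in>I. \<forall>b\<in>I. \<exists>c\<in>I. le a c \<and> le b c)"

definition net_tendsto :: "'i set \<Rightarrow> ('i \<Rightarrow> 'i \<Rightarrow> bool) \<Rightarrow> ('i \<Rightarrow> 'a::metric_space) \<Rightarrow> 'a \<Rightarrow> bool" where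
  "net_tendsto I le x l \<longleftrightarrow> (\<forall>\<epsilon>>0. \<exists>a\<in>I. \<forall>b\<in>I. le a b \<longrightarrow> dist (x b) l < \<epsilon>)"

definition right_identity :: "('h::{real_inner,complete_space} \<Rightarrow>\<^sub>L 'h) set \<Rightarrow> ('h \<Rightarrow>\<^sub>L 'h) \<Rightarrow> bool" where
  "right_identity A e \<longleftrightarrow> e \<in> A \<and> (\<forall>a\<in>A. a o\<^sub>L e = a)"

definition right_cai :: "('h::{real_inner,complete_space} \<Rightarrow>\<^sub>L 'h) set \<Rightarrow> 'i set \<Rightarrow> ('i \<Rightarrow> 'i \<Rightarrow> bool)
    \<Rightarrow> ('i \<Rightarrow> ('h \<Rightarrow>\<^sub>L 'h)) \<Rightarrow> bool" where
  "right_cai A I le e \<longleftrightarrow> directed_set I le \<and> (\<forall>i\<in>I. e i \<in> A \<and> norm (e i) \<le> 1) \<and>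
     (\<forall>a\<in>A. net_tendsto I le (\<lambda>i. a o\<^sub>L e i) a)"

end

theory Submission
  imports Defs
begin

text \<open>A right identity f of A is idempotent, and every contraction c with c f = c satisfies
  \<parallel>c x\<parallel> \<le> dist(x, ker f).  If f a and f b are close to f, the midpoint of a x and b x has norm
  close to dist(x, ker f), so by the parallelogram law a x and b x are close:
  \<parallel>a - b\<parallel>^2 \<le> 4 (\<parallel>f a - f\<parallel> + \<parallel>f b - f\<parallel>).  As f e_\<alpha> \<rightarrow> f, the net (e_\<alpha>) is norm Cauchy; its limit u
  lies in the closed algebra A, is a right identity with \<parallel>u\<parallel> \<le> 1, and \<parallel>u\<parallel> \<ge> 1 because u is a
  nonzero idempotent.\<close>

definition net_filter :: "'i set \<Rightarrow> ('i \<Rightarrow> 'i \<Rightarrow> bool) \<Rightarrow> 'i filter" where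
  "net_filter I le = (INF a\<in>I. principal {b\<in>I. le a b})"

definition net_cauchy :: "'i set \<Rightarrow> ('i \<Rightarrow> 'i \<Rightarrow> bool) \<Rightarrow> ('i \<Rightarrow> 'a::metric_space) \<Rightarrow> bool" where
  "net_cauchy I le x \<longleftrightarrow>
     (\<forall>\<epsilon>>0. \<exists>a\<in>I. \<forall>b\<in>I. \<forall>c\<in>I. le a b \<longrightarrow> le a c \<longrightarrow> dist (x b) (x c) < \<epsilon>)"

lemma directed_setD:
  assumes "directed_set I le"
  shows "I \<noteq> {}"
    and "a \<in> I \<Longrightarrow> le a a"
    and "a \<in> I \<Longrightarrow> b \<in> I \<Longrightarrow> c \<in> I \<Longrightarrow> le a b \<Longrightarrow> le b c \<Longrightarrow> le a c"
    and "a \<in> I \<Longrightarrow> b \<in> I \<Longrightarrow> \<exists>c\<in>I. le a c \<and> le b c"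
  using assms unfolding directed_set_def by blast+

lemma eventually_net_filter:
  assumes "directed_set I le"
  shows "eventually P (net_filter I le) \<longleftrightarrow> (\<exists>a\<in>I. \<forall>b\<in>I. le a b \<longrightarrow> P b)"
proof -
  have directed: "\<exists>c\<in>I. principal {d\<in>I. le c d} \<le> inf (principal {d\<in>I. le a d}) (principal {d\<in>I. le b d})"
    if ab: "a \<in> I" "b \<in> I" for a b
  proof -
    obtain c where c: "c \<in> I" "le a c" "le b c"
      using directed_setD(4)[OF assms ab] by blast
    then have "{d\<in>I. le c d} \<subseteq> {d\<in>I. le a d} \<inter> {d\<in>I. le b d}"
      using directed_setD(3)[OF assms] ab by blast
    then show ?thesis
      using c by (intro bexI[of _ c]) auto
  qed
  show ?thesis
    unfolding net_filter_def
    by (subst eventually_INF_base[OF directed_setD(1)[OF assms] directed]) (auto simp: eventually_principal)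
qed

lemma eventually_in_net_filter:
  assumes "directed_set I le"
  shows "eventually (\<lambda>i. i \<in> I) (net_filter I le)"
  using directed_setD(1)[OF assms] unfolding eventually_net_filter[OF assms] by auto

lemma net_filter_neq_bot:
  assumes "directed_set I le"
  shows "net_filter I le \<noteq> bot"
proof
  assume "net_filter I le = bot"
  then have "\<exists>a\<in>I. \<forall>b\<in>I. le a b \<longrightarrow> False"
    using eventually_net_filter[OF assms, of "\<lambda>_. False"] by simp
  then show False
    using directed_setD(2)[OF assms] by blast
qed

lemma net_tendsto_iff_tendsto:
  assumes "directed_set I le"
  shows "net_tendsto I le x l \<longleftrightarrow> (x \<longlongrightarrow> l) (net_filter I le)"
  unfolding net_tendsto_def tendsto_iff eventually_net_filter[OF assms] by blast

lemma net_cauchy_convergent: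
  fixes x :: "'i \<Rightarrow> 'a::complete_space"
  assumes dir: "directed_set I le" and "net_cauchy I le x"
  shows "\<exists>l. net_tendsto I le x l"
proof -
  have "cauchy_filter (filtermap x (net_filter I le))"
    unfolding cauchy_filter_metric_filtermap
  proof (intro allI impI)
    fix \<epsilon> :: real
    assume "\<epsilon> > 0"
    then obtain a where "a \<in> I" "\<forall>b\<in>I. \<forall>c\<in>I. le a b \<longrightarrow> le a c \<longrightarrow> dist (x b) (x c) < \<epsilon>"
      using assms(2) unfolding net_cauchy_def by blast
    then show "\<exists>P. eventually P (net_filter I le) \<and> (\<forall>b c. P b \<and> P c \<longrightarrow> dist (x b) (x c) < \<epsilon>)"
      by (intro exI[of _ "\<lambda>b. b \<in> I \<and> le a b"]) (auto simp: eventually_net_filter[OF dir])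
  qed
  moreover have "filtermap x (net_filter I le) \<noteq> bot"
    using net_filter_neq_bot[OF dir] by (simp add: filtermap_bot_iff)
  ultimately obtain l where "filtermap x (net_filter I le) \<le> nhds l"
    using cauchy_filter_complete_converges[OF _ complete_UNIV] by auto
  then show ?thesis
    by (auto simp: net_tendsto_iff_tendsto[OF dir] filterlim_def)
qed

lemma net_cauchy_blinfun_apply:
  fixes e :: "'i \<Rightarrow> 'a::real_normed_vector \<Rightarrow>\<^sub>L 'b::real_normed_vector"
  assumes "net_cauchy I le e"
  shows "net_cauchy I le (\<lambda>i. e i x)"
  unfolding net_cauchy_def
proof (intro allI impI)
  fix \<epsilon> :: real
  assume "\<epsilon> > 0"
  have "norm x + 1 > 0"
    using norm_ge_zero[of x] by linarith
  define \<delta> where "\<delta> = \<epsilon> / (norm x + 1)"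
  have "\<delta> > 0"
    unfolding \<delta>_def using \<open>\<epsilon> > 0\<close> \<open>norm x + 1 > 0\<close> by simp
  then obtain a where "a \<in> I" and a: "\<forall>b\<in>I. \<forall>c\<in>I. le a b \<longrightarrow> le a c \<longrightarrow> dist (e b) (e c) < \<delta>"
    using assms unfolding net_cauchy_def by blast
  have "dist (e b x) (e c x) < \<epsilon>" if "b \<in> I" "c \<in> I" "le a b" "le a c" for b c
  proof -
    have "dist (e b x) (e c x) \<le> norm (e b - e c) * norm x"
      by (metis dist_norm blinfun.diff_left norm_blinfun)
    also have "\<dots> \<le> \<delta> * norm x"
      using a that by (intro mult_right_mono) (auto simp: dist_norm less_imp_le)
    also have "\<dots> < \<delta> * (norm x + 1)"
      using \<open>\<delta> > 0\<close> by simp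
    also have "\<dots> = \<epsilon>"
      unfolding \<delta>_def using \<open>norm x + 1 > 0\<close> by simp
    finally show ?thesis .
  qed
  then show "\<exists>a\<in>I. \<forall>b\<in>I. \<forall>c\<in>I. le a b \<longrightarrow> le a c \<longrightarrow> dist (e b x) (e c x) < \<epsilon>"
    using \<open>a \<in> I\<close> by blast
qed

lemma net_cauchy_blinfun_uniform_limit:
  fixes e :: "'i \<Rightarrow> 'a::real_normed_vector \<Rightarrow>\<^sub>L 'b::real_normed_vector"
  assumes dir: "directed_set I le" and "net_cauchy I le e"
    and lim: "\<And>x. ((\<lambda>i. e i x) \<longlongrightarrow> v x) (net_filter I le)" and "\<epsilon> > 0"
  shows "\<exists>a\<in>I. \<forall>b\<in>I. le a b \<longrightarrow> (\<forall>x. norm (e b x - v x) \<le> \<epsilon> * norm x)"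
proof -
  obtain a where "a \<in> I" and a: "\<forall>b\<in>I. \<forall>c\<in>I. le a b \<longrightarrow> le a c \<longrightarrow> dist (e b) (e c) < \<epsilon>"
    using assms(2,4) unfolding net_cauchy_def by blast
  have "norm (e b x - v x) \<le> \<epsilon> * norm x" if "b \<in> I" "le a b" for b x
  proof (rule tendsto_upperbound[OF _ _ net_filter_neq_bot[OF dir]])
    show "((\<lambda>c. norm (e b x - e c x)) \<longlongrightarrow> norm (e b x - v x)) (net_filter I le)"
      by (intro tendsto_intros lim)
    have "norm (e b x - e c x) \<le> \<epsilon> * norm x" if "c \<in> I" "le a c" for c
    proof -
      have "norm (e b x - e c x) \<le> norm (e b - e c) * norm x"
        by (metis blinfun.diff_left norm_blinfun)
      also have "\<dots> \<le> \<epsilon> * norm x"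
        using a \<open>b \<in> I\<close> \<open>le a b\<close> that by (intro mult_right_mono) (auto simp: dist_norm less_imp_le)
      finally show ?thesis .
    qed
    then show "eventually (\<lambda>c. norm (e b x - e c x) \<le> \<epsilon> * norm x) (net_filter I le)"
      unfolding eventually_net_filter[OF dir] using \<open>a \<in> I\<close> by blast
  qed
  then show ?thesis
    using \<open>a \<in> I\<close> by blast
qed

lemma bounded_linear_pointwise_limit:
  fixes e :: "'i \<Rightarrow> 'a::real_normed_vector \<Rightarrow>\<^sub>L 'b::real_normed_vector"
  assumes "F \<noteq> bot" and lim: "\<And>x. ((\<lambda>i. e i x) \<longlongrightarrow> v x) F" and "\<And>x. norm (v x) \<le> norm x * K"
  shows "bounded_linear v"
proof (rule bounded_linear_intro[OF _ _ assms(3)])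
  fix x y
  have "((\<lambda>i. e i (x + y)) \<longlongrightarrow> v x + v y) F"
    unfolding blinfun.add_right by (intro tendsto_add lim)
  then show "v (x + y) = v x + v y"
    using tendsto_unique[OF assms(1) lim] by blast
next
  fix r x
  have "((\<lambda>i. e i (r *\<^sub>R x)) \<longlongrightarrow> r *\<^sub>R v x) F"
    unfolding blinfun.scaleR_right by (intro tendsto_scaleR tendsto_const lim)
  then show "v (r *\<^sub>R x) = r *\<^sub>R v x"
    using tendsto_unique[OF assms(1) lim] by blast
qed

text \<open>The library shows completeness of the space of bounded linear operators only for codomains
  of sort banach, which the sort {real_inner, complete_space} of the theorem does not entail;
  hence this direct proof.\<close>

lemma blinfun_net_cauchy_convergent:
  fixes e :: "'i \<Rightarrow> 'a::real_normed_vector \<Rightarrow>\<^sub>L 'b::{real_normed_vector,complete_space}"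
  assumes dir: "directed_set I le" and cauchy: "net_cauchy I le e"
  shows "\<exists>u. net_tendsto I le e u"
proof -
  have "\<forall>x. \<exists>l. ((\<lambda>i. e i x) \<longlongrightarrow> l) (net_filter I le)"
    using net_cauchy_convergent[OF dir net_cauchy_blinfun_apply[OF cauchy]]
    by (simp add: net_tendsto_iff_tendsto[OF dir])
  then obtain v where lim: "\<And>x. ((\<lambda>i. e i x) \<longlongrightarrow> v x) (net_filter I le)"
    by metis
  note uniform = net_cauchy_blinfun_uniform_limit[OF dir cauchy lim]
  obtain a where "a \<in> I" and "\<forall>b\<in>I. le a b \<longrightarrow> (\<forall>x. norm (e b x - v x) \<le> 1 * norm x)"
    using uniform[of 1] by auto
  then have close: "norm (e a x - v x) \<le> norm x" for x
    using directed_setD(2)[OF dir] by simp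
  have "norm (v x) \<le> norm x * (norm (e a) + 1)" for x
  proof -
    have "norm (v x) \<le> norm (e a x) + norm (e a x - v x)"
      using norm_triangle_ineq4[of "e a x" "e a x - v x"] by simp
    also have "\<dots> \<le> norm (e a) * norm x + norm x"
      by (intro add_mono norm_blinfun close)
    finally show ?thesis
      by (simp add: algebra_simps)
  qed
  then have "bounded_linear v"
    by (rule bounded_linear_pointwise_limit[OF net_filter_neq_bot[OF dir] lim])
  have "\<exists>a\<in>I. \<forall>b\<in>I. le a b \<longrightarrow> dist (e b) (Blinfun v) < \<epsilon>" if "\<epsilon> > 0" for \<epsilon>
  proof -
    obtain a where "a \<in> I" and a: "\<forall>b\<in>I. le a b \<longrightarrow> (\<forall>x. norm (e b x - v x) \<le> \<epsilon> / 2 * norm x)"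
      using uniform[of "\<epsilon> / 2"] \<open>\<epsilon> > 0\<close> by auto
    have "dist (e b) (Blinfun v) < \<epsilon>" if "b \<in> I" "le a b" for b
    proof -
      have "norm (e b - Blinfun v) \<le> \<epsilon> / 2"
        using a that \<open>\<epsilon> > 0\<close> \<open>bounded_linear v\<close>
        by (intro norm_blinfun_bound) (auto simp: blinfun.diff_left bounded_linear_Blinfun_apply)
      then show ?thesis
        using \<open>\<epsilon> > 0\<close> by (simp add: dist_norm)
    qed
    then show ?thesis
      using \<open>a \<in> I\<close> by blast
  qed
  then show ?thesis
    unfolding net_tendsto_def by blast
qed

lemma norm_apply_le_infdist_kernel:
  fixes f :: "'a::real_normed_vector \<Rightarrow>\<^sub>L 'a" and c :: "'a \<Rightarrow>\<^sub>L 'b::real_normed_vector"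
  assumes "c o\<^sub>L f = c" and "norm c \<le> 1"
  shows "norm (c x) \<le> infdist x {k. f k = 0}"
proof -
  have "norm (c x) \<le> dist x k" if "f k = 0" for k
  proof -
    have "c x = c (f (x - k))"
      using assms(1) that by (metis blinfun_apply_blinfun_compose blinfun.diff_right diff_zero)
    also have "\<dots> = c (x - k)"
      using assms(1) by (metis blinfun_apply_blinfun_compose)
    finally have "norm (c x) \<le> norm c * norm (x - k)"
      by (metis norm_blinfun)
    also have "\<dots> \<le> norm (x - k)"
      using assms(2) by (simp add: mult_left_le_one_le)
    finally show ?thesis
      by (simp add: dist_norm)
  qed
  moreover have kernel_nonempty: "{k. f k = 0} \<noteq> {}"
    using blinfun.zero_right[of f] by blast
  ultimately show ?thesis
    unfolding infdist_notempty[OF kernel_nonempty] by (auto intro!: cINF_greatest)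
qed

lemma infdist_kernel_idempotent_le:
  fixes f :: "'a::real_normed_vector \<Rightarrow>\<^sub>L 'a"
  assumes "f o\<^sub>L f = f"
  shows "infdist x {k. f k = 0} \<le> norm y + norm (f y - f x)"
proof -
  define k where "k = f (y - x) - (y - x)"
  have "f k = 0"
    using assms unfolding k_def by (metis blinfun_apply_blinfun_compose blinfun.diff_right diff_self)
  then have "infdist x {k. f k = 0} \<le> dist x k"
    by (intro infdist_le) simp
  also have "dist x k = norm (y - (f y - f x))"
    unfolding k_def dist_norm by (simp add: blinfun.diff_right algebra_simps)
  also have "\<dots> \<le> norm y + norm (f y - f x)"
    by (rule norm_triangle_ineq4)
  finally show ?thesis .
qed

lemma norm_diff_squared_le_midpoint_defect:
  fixes p q :: "'a::real_inner"
  assumes "norm p \<le> d" "norm q \<le> d" "d - t \<le> norm (p + q) / 2" "0 \<le> t"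
  shows "(norm (p - q))\<^sup>2 \<le> 8 * t * d"
proof -
  have parallelogram: "(norm (p - q))\<^sup>2 = 2 * (norm p)\<^sup>2 + 2 * (norm q)\<^sup>2 - (norm (p + q))\<^sup>2"
    by (simp add: power2_norm_eq_inner inner_simps inner_commute)
  have "(norm p)\<^sup>2 \<le> d\<^sup>2" "(norm q)\<^sup>2 \<le> d\<^sup>2"
    using assms(1,2) by (simp_all add: power_mono)
  moreover have "4 * d\<^sup>2 - (norm (p + q))\<^sup>2 \<le> 8 * t * d"
  proof (cases "t \<le> d")
    case True
    then have "(2 * (d - t))\<^sup>2 \<le> (norm (p + q))\<^sup>2"
      using assms(3) by (intro power_mono) auto
    moreover have "(2 * (d - t))\<^sup>2 = 4 * d\<^sup>2 - 8 * t * d + 4 * t\<^sup>2"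
      by (simp add: power2_eq_square algebra_simps)
    ultimately show ?thesis
      using zero_le_power2[of t] by linarith
  next
    case False
    have "0 \<le> d"
      using assms(1) norm_ge_zero order_trans by blast
    then have "d * d \<le> t * d" and "0 \<le> t * d"
      using False assms(4) by (simp_all add: mult_right_mono)
    then show ?thesis
      using zero_le_power2[of "norm (p + q)"] unfolding power2_eq_square by linarith
  qed
  ultimately show ?thesis
    using parallelogram by linarith
qed

lemma norm_diff_squared_le_idempotent_defect:
  fixes f a b :: "'a::real_inner \<Rightarrow>\<^sub>L 'a"
  assumes "f o\<^sub>L f = f" "a o\<^sub>L f = a" "b o\<^sub>L f = b" "norm a \<le> 1" "norm b \<le> 1"
  shows "(norm (a - b))\<^sup>2 \<le> 4 * (norm ((f o\<^sub>L a) - f) + norm ((f o\<^sub>L b) - f))"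
proof -
  define s where "s = norm ((f o\<^sub>L a) - f) + norm ((f o\<^sub>L b) - f)"
  have "norm ((a - b) x) \<le> sqrt (4 * s) * norm x" for x
  proof -
    define d where "d = infdist x {k. f k = 0}"
    define y where "y = (a x + b x) /\<^sub>R 2"
    have "f y - f x = (((f o\<^sub>L a) - f) x + ((f o\<^sub>L b) - f) x) /\<^sub>R 2"
      unfolding y_def
      by (simp only: blinfun.diff_left blinfun_apply_blinfun_compose blinfun.add_right blinfun.scaleR_right)
        (simp add: algebra_simps flip: scaleR_2)
    then have "norm (f y - f x) \<le> s * norm x / 2"
      using norm_triangle_ineq[of "((f o\<^sub>L a) - f) x" "((f o\<^sub>L b) - f) x"]
        norm_blinfun[of "(f o\<^sub>L a) - f" x] norm_blinfun[of "(f o\<^sub>L b) - f" x]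
      unfolding s_def by (simp add: distrib_right)
    moreover have "norm y = norm (a x + b x) / 2"
      unfolding y_def by simp
    ultimately have "d - s * norm x / 2 \<le> norm (a x + b x) / 2"
      using infdist_kernel_idempotent_le[OF assms(1), of x y] unfolding d_def by linarith
    then have "(norm (a x - b x))\<^sup>2 \<le> 8 * (s * norm x / 2) * d"
      using norm_apply_le_infdist_kernel[OF assms(2,4)] norm_apply_le_infdist_kernel[OF assms(3,5)]
      by (intro norm_diff_squared_le_midpoint_defect) (auto simp: d_def s_def)
    also have "\<dots> \<le> 8 * (s * norm x / 2) * norm x"
      using infdist_le[of 0 "{k. f k = 0}" x] unfolding d_def s_def
      by (intro mult_left_mono) auto
    finally have "(norm ((a - b) x))\<^sup>2 \<le> 4 * s * (norm x)\<^sup>2"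
      by (simp add: blinfun.diff_left power2_eq_square)
    then show ?thesis
      by (metis real_le_rsqrt real_sqrt_abs abs_norm_cancel real_sqrt_mult)
  qed
  then have "norm (a - b) \<le> sqrt (4 * s)"
    by (intro norm_blinfun_bound) (auto simp: s_def)
  then have "(norm (a - b))\<^sup>2 \<le> (sqrt (4 * s))\<^sup>2"
    by (intro power_mono) auto
  then show ?thesis
    by (simp add: s_def)
qed

lemma net_cauchy_of_contractions_absorbing_idempotent:
  fixes f :: "'a::real_inner \<Rightarrow>\<^sub>L 'a" and e :: "'i \<Rightarrow> 'a \<Rightarrow>\<^sub>L 'a"
  assumes "f o\<^sub>L f = f"
    and "\<And>i. i \<in> I \<Longrightarrow> e i o\<^sub>L f = e i" and "\<And>i. i \<in> I \<Longrightarrow> norm (e i) \<le> 1"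
    and "net_tendsto I le (\<lambda>i. f o\<^sub>L e i) f"
  shows "net_cauchy I le e"
  unfolding net_cauchy_def
proof (intro allI impI)
  fix \<epsilon> :: real
  assume "\<epsilon> > 0"
  then have "\<epsilon>\<^sup>2 / 8 > 0"
    by simp
  then obtain a where "a \<in> I" and a: "\<forall>b\<in>I. le a b \<longrightarrow> norm ((f o\<^sub>L e b) - f) < \<epsilon>\<^sup>2 / 8"
    using assms(4) unfolding net_tendsto_def dist_norm by blast
  have "dist (e b) (e c) < \<epsilon>" if "b \<in> I" "c \<in> I" "le a b" "le a c" for b c
  proof -
    have "norm ((f o\<^sub>L e b) - f) < \<epsilon>\<^sup>2 / 8" and "norm ((f o\<^sub>L e c) - f) < \<epsilon>\<^sup>2 / 8"
      using a that by blast+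
    have "(norm (e b - e c))\<^sup>2 \<le> 4 * (norm ((f o\<^sub>L e b) - f) + norm ((f o\<^sub>L e c) - f))"
      using assms(1-3) that by (intro norm_diff_squared_le_idempotent_defect) auto
    also have "\<dots> < \<epsilon>\<^sup>2"
      using \<open>norm ((f o\<^sub>L e b) - f) < \<epsilon>\<^sup>2 / 8\<close> \<open>norm ((f o\<^sub>L e c) - f) < \<epsilon>\<^sup>2 / 8\<close> by simp
    finally have "(norm (e b - e c))\<^sup>2 < \<epsilon>\<^sup>2" .
    then have "norm (e b - e c) < \<epsilon>"
      by (rule power2_less_imp_less) (use \<open>\<epsilon> > 0\<close> in simp)
    then show ?thesis
      by (simp add: dist_norm)
  qed
  then show "\<exists>a\<in>I. \<forall>b\<in>I. \<forall>c\<in>I. le a b \<longrightarrow> le a c \<longrightarrow> dist (e b) (e c) < \<epsilon>"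
    using \<open>a \<in> I\<close> by blast
qed

lemma one_le_norm_idempotent:
  fixes u :: "'a::real_normed_vector \<Rightarrow>\<^sub>L 'a"
  assumes "u o\<^sub>L u = u" and "u \<noteq> 0"
  shows "1 \<le> norm u"
proof -
  have "norm u \<le> norm u * norm u"
    using norm_blinfun_compose[of u u] assms(1) by simp
  then show ?thesis
    using assms(2) by simp
qed

lemma right_identity_of_right_cai_limit:
  fixes A :: "('h::{real_inner,complete_space} \<Rightarrow>\<^sub>L 'h) set"
  assumes "closed A" and "right_cai A I le e" and "net_tendsto I le e u"
  shows "right_identity A u \<and> norm u \<le> 1"
proof -
  have dir: "directed_set I le" and e: "\<forall>i\<in>I. e i \<in> A \<and> norm (e i) \<le> 1"
    and approx: "\<forall>a\<in>A. net_tendsto I le (\<lambda>i. a o\<^sub>L e i) a"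
    using assms(2) by (auto simp: right_cai_def)
  let ?F = "net_filter I le"
  have lim: "(e \<longlongrightarrow> u) ?F" and nontrivial: "?F \<noteq> bot"
    using assms(3) net_tendsto_iff_tendsto[OF dir] net_filter_neq_bot[OF dir] by auto
  have eventually_e: "eventually (\<lambda>i. e i \<in> A \<and> norm (e i) \<le> 1) ?F"
    using eventually_in_net_filter[OF dir] by (rule eventually_mono) (use e in blast)
  have "u \<in> A"
    using Lim_in_closed_set[OF assms(1) eventually_mono[OF eventually_e] nontrivial lim] by blast
  moreover have "a o\<^sub>L u = a" if "a \<in> A" for a
  proof -
    have "((\<lambda>i. a o\<^sub>L e i) \<longlongrightarrow> a o\<^sub>L u) ?F"
      by (intro bounded_bilinear.tendsto[OF bounded_bilinear_blinfun_compose] tendsto_const lim)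
    moreover have "((\<lambda>i. a o\<^sub>L e i) \<longlongrightarrow> a) ?F"
      using approx that net_tendsto_iff_tendsto[OF dir] by blast
    ultimately show ?thesis
      using tendsto_unique[OF nontrivial] by blast
  qed
  moreover have "norm u \<le> 1"
    using tendsto_upperbound[OF tendsto_norm[OF lim] eventually_mono[OF eventually_e] nontrivial] by blast
  ultimately show ?thesis
    by (simp add: right_identity_def)
qed

lemma norm_contractive_right_identity_eq_one:
  fixes A :: "('h::{real_inner,complete_space} \<Rightarrow>\<^sub>L 'h) set"
  assumes "right_identity A u" and "norm u \<le> 1" and "A \<noteq> {0}"
  shows "norm u = 1"
proof -
  have "u \<in> A" and u_unit: "\<And>a. a \<in> A \<Longrightarrow> a o\<^sub>L u = a"
    using assms(1) unfolding right_identity_def by blast+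
  have "\<not> A \<subseteq> {0}"
    using assms(3) \<open>u \<in> A\<close> subset_singletonD by fastforce
  then obtain a where "a \<in> A" and "a \<noteq> 0"
    by blast
  then have "u \<noteq> 0"
    using u_unit[OF \<open>a \<in> A\<close>] by auto
  then have "1 \<le> norm u"
    using one_le_norm_idempotent u_unit[OF \<open>u \<in> A\<close>] by blast
  then show ?thesis
    using assms(2) by simp
qed

theorem corollary2p21:
  fixes J :: "'h::{real_inner,complete_space} \<Rightarrow>\<^sub>L 'h"
    and A :: "('h \<Rightarrow>\<^sub>L 'h) set"
    and I :: "'i set" and le :: "'i \<Rightarrow> 'i \<Rightarrow> bool" and e :: "'i \<Rightarrow> ('h \<Rightarrow>\<^sub>L 'h)"
  assumes "operator_algebra J A"
    and "A \<noteq> {0}"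
    and "right_cai A I le e"
    and "\<exists>f. right_identity A f"
  shows "\<exists>u. right_identity A u \<and> norm u = 1 \<and> net_tendsto I le e u"
proof -
  obtain f where "f \<in> A" and f_unit: "\<And>a. a \<in> A \<Longrightarrow> a o\<^sub>L f = a"
    using assms(4) unfolding right_identity_def by blast
  have dir: "directed_set I le"
    and e_in: "\<And>i. i \<in> I \<Longrightarrow> e i \<in> A" and e_norm: "\<And>i. i \<in> I \<Longrightarrow> norm (e i) \<le> 1"
    and approx: "\<And>a. a \<in> A \<Longrightarrow> net_tendsto I le (\<lambda>i. a o\<^sub>L e i) a"
    using assms(3) unfolding right_cai_def by blast+
  have "net_cauchy I le e"
    using f_unit[OF \<open>f \<in> A\<close>] f_unit[OF e_in] e_norm approx[OF \<open>f \<in> A\<close>]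
    by (rule net_cauchy_of_contractions_absorbing_idempotent)
  then obtain u where lim: "net_tendsto I le e u"
    using blinfun_net_cauchy_convergent[OF dir] by blast
  have "closed A"
    using assms(1) by (simp add: operator_algebra_def)
  then have "right_identity A u" and "norm u \<le> 1"
    using right_identity_of_right_cai_limit[OF _ assms(3) lim] by blast+
  moreover from this have "norm u = 1"
    using assms(2) by (rule norm_contractive_right_identity_eq_one)
  ultimately show ?thesis
    using lim by blast
qed

end
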